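(* Let $\mathbb{G}$ be an $E$-group. (i) If $\mathbb{G}$ is $2$-acyclic, then for every $g\in\mathbb{G}$ the set $\alpha_g:=\bigcap\{\alpha'\subseteq E: g\in\mathbb{G}[\alpha']\}$ satisfies $g\in\mathbb{G}[\alpha_g]$, so it is the unique $\subseteq$-minimal $\alpha'\subseteq E$ with $g\in\mathbb{G}[\alpha']$. (ii) If $\mathbb{G}$ is $3$-acyclic, then for every $\alpha\subseteq E$ and $g\in\mathbb{G}$, the coset $B=g\mathbb{G}[\alpha]$ and the set $\alpha_B:=\bigcap\{\alpha_h: h\in B\}$ (with $\alpha_h$ as in (i)) satisfy $\mathbb{G}[\alpha_B]\cap B\neq\emptyset$; thus $\alpha_B$ is the unique $\subseteq$-minimal $\alpha'\subseteq E$ with $\mathbb{G}[\alpha']\cap B\neq\emptyset$.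
   Context: Let $E$ be a finite set. An $E$-group is a group $\mathbb{G}$ together with an inclusion $E\subseteq\mathbb{G}$ such that $E$ generates $\mathbb{G}$ and every $e\in E$ satisfies $e\neq1$, $e^2=1$. For $\alpha\subseteq E$, $\mathbb{G}[\alpha]$ is the subgroup generated by $\alpha$. A coset cycle of length $n\ge2$ in $\mathbb{G}$ is a cyclically indexed family $(g_i,\alpha_i)_{i\in\mathbb{Z}_n}$ with $g_i\in\mathbb{G}$, $\alpha_i\subseteq E$, such that for all $i$: $g_{i+1}\in g_i\mathbb{G}[\alpha_i]$ and $g_i\mathbb{G}[\alpha_i\cap\alpha_{i-1}]\cap g_{i+1}\mathbb{G}[\alpha_i\cap\alpha_{i+1}]=\emptyset$. $\mathbb{G}$ is $N$-acyclic ($N\ge2$) if it admits no coset cycle of length $n$ with $2\le n\le N$. *)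

theory Defs
  imports "HOL-Algebra.Generated_Groups" "HOL-Algebra.Coset"
begin

definition E_group :: "('a, 'b) monoid_scheme \<Rightarrow> 'a set \<Rightarrow> bool" where
  "E_group G E \<longleftrightarrow> group G \<and> finite E \<and> E \<subseteq> carrier G \<and> generate G E = carrier G \<and>
     (\<forall>e\<in>E. e \<noteq> \<one>\<^bsub>G\<^esub> \<and> e \<otimes>\<^bsub>G\<^esub> e = \<one>\<^bsub>G\<^esub>)"

definition coset_cycle ::
  "('a, 'b) monoid_scheme \<Rightarrow> 'a set \<Rightarrow> nat \<Rightarrow> (nat \<Rightarrow> 'a) \<Rightarrow> (nat \<Rightarrow> 'a set) \<Rightarrow> bool" where
  "coset_cycle G E n g \<alpha> \<longleftrightarrow> 2 \<le> n \<and>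
     (\<forall>i<n. g i \<in> carrier G \<and> \<alpha> i \<subseteq> E \<and>
        g ((i + 1) mod n) \<in> g i <#\<^bsub>G\<^esub> generate G (\<alpha> i) \<and>
        (g i <#\<^bsub>G\<^esub> generate G (\<alpha> i \<inter> \<alpha> ((i + n - 1) mod n))) \<inter>
        (g ((i + 1) mod n) <#\<^bsub>G\<^esub> generate G (\<alpha> i \<inter> \<alpha> ((i + 1) mod n))) = {})"

definition N_acyclic :: "('a, 'b) monoid_scheme \<Rightarrow> 'a set \<Rightarrow> nat \<Rightarrow> bool" where
  "N_acyclic G E N \<longleftrightarrow> (\<forall>n g \<alpha>. 2 \<le> n \<and> n \<le> N \<longrightarrow> \<not> coset_cycle G E n g \<alpha>)"

definition alpha_of :: "('a, 'b) monoid_scheme \<Rightarrow> 'a set \<Rightarrow> 'a \<Rightarrow> 'a set" where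
  "alpha_of G E h = \<Inter>{\<alpha>'. \<alpha>' \<subseteq> E \<and> h \<in> generate G \<alpha>'}"

end

theory Submission
  imports Defs "HOL-Algebra.Left_Coset"
begin

text \<open>
  In a 2-acyclic E-group, \<open>G[\<alpha>\<^sub>1] \<inter> G[\<alpha>\<^sub>2] = G[\<alpha>\<^sub>1 \<inter> \<alpha>\<^sub>2]\<close>: an element of the left-hand
  side outside the right-hand side yields the 2-cycle \<open>(1, \<alpha>\<^sub>1), (x, \<alpha>\<^sub>2)\<close>. Hence the
  generator sets \<open>\<alpha>'\<close> with \<open>g \<in> G[\<alpha>']\<close> form a finite family closed under intersection,
  and \<open>\<alpha>\<^sub>g\<close> belongs to it. Likewise, in a 3-acyclic E-group, if \<open>G[\<beta>\<^sub>1]\<close> and \<open>G[\<beta>\<^sub>2]\<close>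
  meet the coset \<open>B\<close> in \<open>h\<^sub>1\<close> and \<open>h\<^sub>2\<close> but \<open>G[\<beta>\<^sub>1 \<inter> \<beta>\<^sub>2]\<close> does not, then
  \<open>(1, \<beta>\<^sub>1), (h\<^sub>1, \<alpha>), (h\<^sub>2, \<beta>\<^sub>2)\<close> is a 3-cycle; so the generator sets whose subgroup meets
  \<open>B\<close> are closed under intersection too, and their intersection is \<open>\<alpha>\<^sub>B\<close>.
\<close>

lemma Inter_mem_if_Int_closed:
  assumes "finite S" "S \<noteq> {}" "\<And>a b. a \<in> S \<Longrightarrow> b \<in> S \<Longrightarrow> a \<inter> b \<in> S"
  shows "\<Inter>S \<in> S"
proof -
  have "\<Inter>T \<in> S" if "finite T" "T \<noteq> {}" "T \<subseteq> S" for T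
    using that by (induction T rule: finite_ne_induct) (simp_all add: assms(3))
  then show ?thesis using assms(1,2) by blast
qed

lemma N_acyclic_mono: "N_acyclic G E N \<Longrightarrow> M \<le> N \<Longrightarrow> N_acyclic G E M"
  unfolding N_acyclic_def by auto

lemma coset_cycle_2I:
  assumes "g0 \<in> carrier G" "g1 \<in> carrier G" "a0 \<subseteq> E" "a1 \<subseteq> E"
    and "g1 \<in> g0 <#\<^bsub>G\<^esub> generate G a0" "g0 \<in> g1 <#\<^bsub>G\<^esub> generate G a1"
    and "(g0 <#\<^bsub>G\<^esub> generate G (a0 \<inter> a1)) \<inter> (g1 <#\<^bsub>G\<^esub> generate G (a0 \<inter> a1)) = {}"
  shows "coset_cycle G E 2 (\<lambda>i. if i = 0 then g0 else g1) (\<lambda>i. if i = 0 then a0 else a1)"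
  unfolding coset_cycle_def numeral_2_eq_2 All_less_Suc by (simp add: assms Int_commute)

lemma coset_cycle_3I:
  assumes "g0 \<in> carrier G" "g1 \<in> carrier G" "g2 \<in> carrier G" "a0 \<subseteq> E" "a1 \<subseteq> E" "a2 \<subseteq> E"
    and "g1 \<in> g0 <#\<^bsub>G\<^esub> generate G a0" "g2 \<in> g1 <#\<^bsub>G\<^esub> generate G a1"
      "g0 \<in> g2 <#\<^bsub>G\<^esub> generate G a2"
    and "(g0 <#\<^bsub>G\<^esub> generate G (a0 \<inter> a2)) \<inter> (g1 <#\<^bsub>G\<^esub> generate G (a0 \<inter> a1)) = {}"
      "(g1 <#\<^bsub>G\<^esub> generate G (a1 \<inter> a0)) \<inter> (g2 <#\<^bsub>G\<^esub> generate G (a1 \<inter> a2)) = {}"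
      "(g2 <#\<^bsub>G\<^esub> generate G (a2 \<inter> a1)) \<inter> (g0 <#\<^bsub>G\<^esub> generate G (a2 \<inter> a0)) = {}"
  shows "coset_cycle G E 3 (\<lambda>i. if i = 0 then g0 else if i = 1 then g1 else g2)
           (\<lambda>i. if i = 0 then a0 else if i = 1 then a1 else a2)"
  unfolding coset_cycle_def numeral_3_eq_3 All_less_Suc by (simp add: assms)

context group
begin

lemma l_coset_subset_l_coset:
  assumes "subgroup H G" "g \<in> carrier G" "h \<in> g <# H" "K \<subseteq> H"
  shows "h <# K \<subseteq> g <# H"
proof -
  have "h <# K \<subseteq> h <# H" using assms(4) unfolding l_coset_def by blast
  also have "\<dots> = g <# H" using l_repr_independence[OF assms(3,2,1)] by simp
  finally show ?thesis .
qed

lemma l_coset_subset_subgroup: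
  assumes "subgroup H G" "h \<in> H" "K \<subseteq> H"
  shows "h <# K \<subseteq> H"
proof -
  have "\<one> <# H = H" by (rule lcos_mult_one[OF subgroup.subset[OF assms(1)]])
  with l_coset_subset_l_coset[OF assms(1) one_closed, of h K] assms(2,3) show ?thesis by simp
qed

lemma subgroup_Int_l_coset_eq_empty:
  assumes "subgroup H G" "x \<in> carrier G" "x \<notin> H"
  shows "H \<inter> (x <# H) = {}"
proof (rule ccontr)
  assume "H \<inter> (x <# H) \<noteq> {}"
  then obtain y where "y \<in> H" "y \<in> x <# H" by blast
  then have "x \<in> y <# H" using l_coset_swap assms(1,2) by blast
  with \<open>y \<in> H\<close> have "x \<in> H" using l_coset_subset_subgroup[OF assms(1)] by blast
  with assms(3) show False ..
qed

lemma generate_Int_if_2_acyclic: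
  assumes acyclic: "N_acyclic G E 2" and E: "E \<subseteq> carrier G" and "\<alpha>1 \<subseteq> E" "\<alpha>2 \<subseteq> E"
  shows "generate G \<alpha>1 \<inter> generate G \<alpha>2 = generate G (\<alpha>1 \<inter> \<alpha>2)"
proof
  show "generate G (\<alpha>1 \<inter> \<alpha>2) \<subseteq> generate G \<alpha>1 \<inter> generate G \<alpha>2"
    using mono_generate[of "\<alpha>1 \<inter> \<alpha>2" \<alpha>1] mono_generate[of "\<alpha>1 \<inter> \<alpha>2" \<alpha>2] by blast
  show "generate G \<alpha>1 \<inter> generate G \<alpha>2 \<subseteq> generate G (\<alpha>1 \<inter> \<alpha>2)"
  proof (rule subsetI, rule ccontr)
    fix x
    assume x: "x \<in> generate G \<alpha>1 \<inter> generate G \<alpha>2" and x_notin: "x \<notin> generate G (\<alpha>1 \<inter> \<alpha>2)"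
    have sub: "subgroup (generate G \<beta>) G" if "\<beta> \<subseteq> E" for \<beta>
      using generate_is_subgroup that E by blast
    have one_coset: "\<one> <# generate G \<beta> = generate G \<beta>" if "\<beta> \<subseteq> E" for \<beta>
      using lcos_mult_one[OF subgroup.subset[OF sub[OF that]]] .
    have x_carrier: "x \<in> carrier G" using x subgroup.mem_carrier[OF sub] assms(3) by blast
    have "coset_cycle G E 2 (\<lambda>i. if i = 0 then \<one> else x) (\<lambda>i. if i = 0 then \<alpha>1 else \<alpha>2)"
    proof (rule coset_cycle_2I)
      show "x \<in> \<one> <# generate G \<alpha>1" using x one_coset assms(3) by simp
      show "\<one> \<in> x <# generate G \<alpha>2"
        using l_coset_swap[OF _ one_closed sub] x one_coset assms(4) by simp
      show "(\<one> <# generate G (\<alpha>1 \<inter> \<alpha>2)) \<inter> (x <# generate G (\<alpha>1 \<inter> \<alpha>2)) = {}"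
        using subgroup_Int_l_coset_eq_empty[OF sub x_carrier x_notin] one_coset[of "\<alpha>1 \<inter> \<alpha>2"] assms(3)
        by auto
    qed (use x_carrier assms(3,4) in auto)
    with acyclic show False by (simp add: N_acyclic_def)
  qed
qed

lemma generate_Int_meets_l_coset_if_3_acyclic:
  assumes acyclic: "N_acyclic G E 3" and E: "E \<subseteq> carrier G"
    and "\<alpha> \<subseteq> E" "\<beta>1 \<subseteq> E" "\<beta>2 \<subseteq> E" "g \<in> carrier G"
    and h1: "h1 \<in> generate G \<beta>1 \<inter> (g <# generate G \<alpha>)"
    and h2: "h2 \<in> generate G \<beta>2 \<inter> (g <# generate G \<alpha>)"
  shows "generate G (\<beta>1 \<inter> \<beta>2) \<inter> (g <# generate G \<alpha>) \<noteq> {}"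
proof
  let ?B = "g <# generate G \<alpha>"
  assume disjoint: "generate G (\<beta>1 \<inter> \<beta>2) \<inter> ?B = {}"
  have sub: "subgroup (generate G \<gamma>) G" if "\<gamma> \<subseteq> E" for \<gamma>
    using generate_is_subgroup that E by blast
  have one_coset: "\<one> <# generate G \<gamma> = generate G \<gamma>" if "\<gamma> \<subseteq> E" for \<gamma>
    using lcos_mult_one[OF subgroup.subset[OF sub[OF that]]] .
  have in_B: "h <# generate G \<gamma> \<subseteq> ?B" if "h \<in> ?B" "\<gamma> \<subseteq> \<alpha>" for h \<gamma>
    using l_coset_subset_l_coset[OF sub \<open>g \<in> carrier G\<close> that(1) mono_generate[OF that(2)]]
      assms(3) by blast
  have in_generate: "h <# generate G (\<gamma> \<inter> \<delta>) \<subseteq> generate G \<gamma>"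
    if "h \<in> generate G \<gamma>" "\<gamma> \<subseteq> E" for h \<gamma> \<delta>
    using l_coset_subset_subgroup[OF sub that(1) mono_generate] that(2) by blast
  have h_carrier: "h1 \<in> carrier G" "h2 \<in> carrier G"
    using h1 h2 subgroup.mem_carrier[OF sub] assms(4,5) by blast+
  \<comment> \<open>The middle coset condition: \<open>h\<^sub>1 G[\<alpha> \<inter> \<beta>\<^sub>1] \<subseteq> G[\<beta>\<^sub>1] \<inter> B\<close> and \<open>h\<^sub>2 G[\<alpha> \<inter> \<beta>\<^sub>2] \<subseteq> G[\<beta>\<^sub>2]\<close>.\<close>
  have no_common: "generate G \<beta>1 \<inter> generate G \<beta>2 \<inter> ?B = {}"
    using disjoint generate_Int_if_2_acyclic[OF N_acyclic_mono[OF acyclic] E assms(4,5)] by simp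
  have "coset_cycle G E 3 (\<lambda>i. if i = 0 then \<one> else if i = 1 then h1 else h2)
      (\<lambda>i. if i = 0 then \<beta>1 else if i = 1 then \<alpha> else \<beta>2)"
  proof (rule coset_cycle_3I)
    show "h1 \<in> \<one> <# generate G \<beta>1" using h1 one_coset assms(4) by simp
    show "h2 \<in> h1 <# generate G \<alpha>"
      using h1 h2 l_repr_independence[OF _ \<open>g \<in> carrier G\<close> sub] assms(3) by blast
    show "\<one> \<in> h2 <# generate G \<beta>2"
      using l_coset_swap[OF _ one_closed sub] h2 one_coset assms(5) by simp
    show "(\<one> <# generate G (\<beta>1 \<inter> \<beta>2)) \<inter> (h1 <# generate G (\<beta>1 \<inter> \<alpha>)) = {}"
      using disjoint in_B[of h1 "\<beta>1 \<inter> \<alpha>"] h1 one_coset[of "\<beta>1 \<inter> \<beta>2"] assms(4) by auto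
    show "(h2 <# generate G (\<beta>2 \<inter> \<alpha>)) \<inter> (\<one> <# generate G (\<beta>2 \<inter> \<beta>1)) = {}"
      using disjoint in_B[of h2 "\<beta>2 \<inter> \<alpha>"] h2 one_coset[of "\<beta>2 \<inter> \<beta>1"] assms(5)
      by (auto simp: Int_commute)
    show "(h1 <# generate G (\<alpha> \<inter> \<beta>1)) \<inter> (h2 <# generate G (\<alpha> \<inter> \<beta>2)) = {}"
      using no_common in_B[of h1 "\<alpha> \<inter> \<beta>1"] in_generate[of h1 \<beta>1 \<alpha>] in_generate[of h2 \<beta>2 \<alpha>]
        h1 h2 assms(4,5) by (auto simp: Int_commute)
  qed (use h_carrier assms(3-5) in auto)
  with acyclic show False by (simp add: N_acyclic_def)
qed

end

lemma alpha_of_least: "\<alpha>' \<subseteq> E \<Longrightarrow> g \<in> generate G \<alpha>' \<Longrightarrow> alpha_of G E g \<subseteq> \<alpha>'"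
  unfolding alpha_of_def by blast

lemma Inter_alpha_of_least:
  assumes "\<alpha>' \<subseteq> E" "generate G \<alpha>' \<inter> B \<noteq> {}"
  shows "\<Inter>{alpha_of G E h | h. h \<in> B} \<subseteq> \<alpha>'"
proof -
  obtain h where "h \<in> generate G \<alpha>'" "h \<in> B" using assms(2) by blast
  then have "\<Inter>{alpha_of G E h | h. h \<in> B} \<subseteq> alpha_of G E h" by blast
  also have "\<dots> \<subseteq> \<alpha>'" by (rule alpha_of_least[OF assms(1) \<open>h \<in> generate G \<alpha>'\<close>])
  finally show ?thesis .
qed

lemma mem_generate_alpha_of:
  assumes "E_group G E" "N_acyclic G E 2" "g \<in> carrier G"
  shows "g \<in> generate G (alpha_of G E g)"
proof -
  interpret group G using assms(1) by (simp add: E_group_def)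
  have E: "finite E" "E \<subseteq> carrier G" "generate G E = carrier G"
    using assms(1) by (simp_all add: E_group_def)
  let ?F = "{\<alpha>'. \<alpha>' \<subseteq> E \<and> g \<in> generate G \<alpha>'}"
  have "\<Inter>?F \<in> ?F"
  proof (rule Inter_mem_if_Int_closed)
    show "finite ?F" by (rule finite_subset[of _ "Pow E"]) (use E(1) in auto)
    have "E \<in> ?F" using assms(3) E(3) by simp
    then show "?F \<noteq> {}" by blast
    show "a \<inter> b \<in> ?F" if "a \<in> ?F" "b \<in> ?F" for a b
      using that generate_Int_if_2_acyclic[OF assms(2) E(2), of a b] by blast
  qed
  then show ?thesis unfolding alpha_of_def by simp
qed

lemma Inter_alpha_of_eq_Inter_meeting:
  assumes "E_group G E" "N_acyclic G E 2" "B \<subseteq> carrier G"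
  shows "\<Inter>{alpha_of G E h | h. h \<in> B} = \<Inter>{\<alpha>'. \<alpha>' \<subseteq> E \<and> generate G \<alpha>' \<inter> B \<noteq> {}}"
    (is "_ = \<Inter>?S")
proof (rule antisym)
  show "\<Inter>{alpha_of G E h | h. h \<in> B} \<subseteq> \<Inter>?S"
  proof (rule Inter_greatest)
    fix \<alpha>' assume "\<alpha>' \<in> ?S"
    then show "\<Inter>{alpha_of G E h | h. h \<in> B} \<subseteq> \<alpha>'" by (simp add: Inter_alpha_of_least)
  qed
  have E: "generate G E = carrier G" using assms(1) by (simp add: E_group_def)
  show "\<Inter>?S \<subseteq> \<Inter>{alpha_of G E h | h. h \<in> B}"
  proof (rule Inter_greatest)
    fix \<alpha>' assume "\<alpha>' \<in> {alpha_of G E h | h. h \<in> B}"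
    then obtain h where h: "h \<in> B" "\<alpha>' = alpha_of G E h" by blast
    then have "h \<in> generate G \<alpha>'"
      using mem_generate_alpha_of[OF assms(1,2)] assms(3) by blast
    moreover have "\<alpha>' \<subseteq> E"
      using h alpha_of_least[of E E h G] assms(3) E by blast
    ultimately have "\<alpha>' \<in> ?S" using h(1) by blast
    then show "\<Inter>?S \<subseteq> \<alpha>'" by (rule Inter_lower)
  qed
qed

lemma generate_Inter_alpha_of_meets_l_coset:
  assumes "E_group G E" "N_acyclic G E 3" "\<alpha> \<subseteq> E" "g \<in> carrier G"
  defines "B \<equiv> g <#\<^bsub>G\<^esub> generate G \<alpha>"
  shows "generate G (\<Inter>{alpha_of G E h | h. h \<in> B}) \<inter> B \<noteq> {}"
proof -
  interpret group G using assms(1) by (simp add: E_group_def)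
  have E: "finite E" "E \<subseteq> carrier G" "generate G E = carrier G"
    using assms(1) by (simp_all add: E_group_def)
  have sub: "subgroup (generate G \<alpha>) G" using generate_is_subgroup assms(3) E(2) by blast
  have B_carrier: "B \<subseteq> carrier G"
    unfolding B_def by (rule l_coset_subset_G[OF subgroup.subset[OF sub] assms(4)])
  let ?S = "{\<alpha>'. \<alpha>' \<subseteq> E \<and> generate G \<alpha>' \<inter> B \<noteq> {}}"
  have "\<Inter>?S \<in> ?S"
  proof (rule Inter_mem_if_Int_closed)
    show "finite ?S" by (rule finite_subset[of _ "Pow E"]) (use E(1) in auto)
    have "g \<in> generate G E \<inter> B"
      unfolding B_def using lcos_self[OF assms(4) sub] assms(4) E(3) by simp
    then have "E \<in> ?S" by blast
    then show "?S \<noteq> {}" by blast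
    show "a \<inter> b \<in> ?S" if "a \<in> ?S" "b \<in> ?S" for a b
    proof -
      from that obtain h1 h2 where "h1 \<in> generate G a \<inter> B" "h2 \<in> generate G b \<inter> B"
        by blast
      with that have "generate G (a \<inter> b) \<inter> B \<noteq> {}"
        using generate_Int_meets_l_coset_if_3_acyclic[OF assms(2) E(2) assms(3) _ _ assms(4)]
        unfolding B_def by blast
      with that show ?thesis by blast
    qed
  qed
  then show ?thesis
    using Inter_alpha_of_eq_Inter_meeting[OF assms(1) N_acyclic_mono[OF assms(2)] B_carrier] by simp
qed

theorem mainTheorem5:
  fixes G :: "('a, 'b) monoid_scheme" and E :: "'a set"
  assumes "E_group G E"
  shows "(N_acyclic G E 2 \<longrightarrow>
            (\<forall>g\<in>carrier G. g \<in> generate G (alpha_of G E g) \<and>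
               (\<forall>\<alpha>'. \<alpha>' \<subseteq> E \<and> g \<in> generate G \<alpha>' \<longrightarrow> alpha_of G E g \<subseteq> \<alpha>')))
       \<and> (N_acyclic G E 3 \<longrightarrow>
            (\<forall>\<alpha> g. \<alpha> \<subseteq> E \<and> g \<in> carrier G \<longrightarrow>
               (let B = g <#\<^bsub>G\<^esub> generate G \<alpha>;
                    \<alpha>B = \<Inter>{alpha_of G E h | h. h \<in> B}
                in generate G \<alpha>B \<inter> B \<noteq> {} \<and>
                   (\<forall>\<alpha>'. \<alpha>' \<subseteq> E \<and> generate G \<alpha>' \<inter> B \<noteq> {} \<longrightarrow> \<alpha>B \<subseteq> \<alpha>'))))"
  unfolding Let_def
proof (intro conjI impI allI ballI)
  fix g assume "N_acyclic G E 2" "g \<in> carrier G"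
  then show "g \<in> generate G (alpha_of G E g)" by (rule mem_generate_alpha_of[OF assms])
next
  fix g \<alpha>' assume "\<alpha>' \<subseteq> E \<and> g \<in> generate G \<alpha>'"
  then show "alpha_of G E g \<subseteq> \<alpha>'" by (simp add: alpha_of_least)
next
  fix \<alpha> g assume "N_acyclic G E 3" "\<alpha> \<subseteq> E \<and> g \<in> carrier G"
  then show "generate G (\<Inter>{alpha_of G E h | h. h \<in> g <#\<^bsub>G\<^esub> generate G \<alpha>})
      \<inter> (g <#\<^bsub>G\<^esub> generate G \<alpha>) \<noteq> {}"
    by (simp add: generate_Inter_alpha_of_meets_l_coset[OF assms])
next
  fix \<alpha> g \<alpha>' assume "\<alpha>' \<subseteq> E \<and> generate G \<alpha>' \<inter> (g <#\<^bsub>G\<^esub> generate G \<alpha>) \<noteq> {}"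
  then show "\<Inter>{alpha_of G E h | h. h \<in> g <#\<^bsub>G\<^esub> generate G \<alpha>} \<subseteq> \<alpha>'"
    by (simp add: Inter_alpha_of_least)
qed

end
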